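(* Define $\mathcal F_c(b):=P_c\mathcal F(b)$ for $b\in\mathcal N$. Fix $e\in\mathcal N$ with $\|e\|=1$, so that $\mathcal N=\mathrm{span}\{e\}$ is identified with $\mathbb R$ via $\xi\mapsto\xi e$. Then $\mathcal F_c$ is a stable cubic on $\mathcal N\cong\mathbb R$: there is a constant $C>0$ such that $\mathcal F_c(\xi e)=-C\xi^3e$ for all $\xi\in\mathbb R$.
   Context: $\mathcal H$ is a separable real Hilbert space. $A$ is a symmetric, non-positive linear operator on $\mathcal H$ generating a compact analytic semigroup. It has a one-dimensional kernel $\mathcal N$, and $P_c$ denotes the orthogonal projection onto $\mathcal N$. For $\alpha\ge0$, $\mathcal H^\alpha=D((1-A)^\alpha)$. $X$ is a Banach space with continuous dense embeddings $\mathcal H^\alpha\subset X\subset\mathcal H$ for some $\alpha\in(0,1/2)$. $\mathcal F:X\to X^*\subset\mathcal H^{-\alpha}$ is cubic, i.e. $\mathcal F(u)=\mathcal F(u,u,u)$ for a trilinear map, and there is $c>0$ with $\langle\mathcal F(u)-\mathcal F(v),u-v\rangle\le -c\|u-v\|_X^4$ for all $u,v\in X$. *)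

theory Defs
  imports "HOL-Analysis.Analysis"
begin

definition C0_semigroup :: "(real \<Rightarrow> 'h::real_normed_vector \<Rightarrow> 'h) \<Rightarrow> bool" where
  "C0_semigroup S \<longleftrightarrow>
     (\<forall>t\<ge>0. bounded_linear (S t)) \<and> S 0 = id \<and>
     (\<forall>t\<ge>0. \<forall>s\<ge>0. S (t + s) = S t \<circ> S s) \<and>
     (\<forall>x. ((\<lambda>t. S t x) \<longlongrightarrow> x) (at_right 0))"

definition generator_of :: "('h::real_normed_vector \<Rightarrow> 'h) \<Rightarrow> 'h set \<Rightarrow> (real \<Rightarrow> 'h \<Rightarrow> 'h) \<Rightarrow> bool" where
  "generator_of A D S \<longleftrightarrow>
     D = {x. \<exists>y. ((\<lambda>t. (1 / t) *\<^sub>R (S t x - x)) \<longlongrightarrow> y) (at_right 0)} \<and>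
     (\<forall>x\<in>D. ((\<lambda>t. (1 / t) *\<^sub>R (S t x - x)) \<longlongrightarrow> A x) (at_right 0))"

definition compact_semigroup :: "(real \<Rightarrow> 'h::real_normed_vector \<Rightarrow> 'h) \<Rightarrow> bool" where
  "compact_semigroup S \<longleftrightarrow> (\<forall>t>0. compact (closure (S t ` ball 0 1)))"

text \<open>Analytic semigroup with generator (A, D), via the standard characterization
  S t maps into D for t > 0 and the norm of A S t is O(1/t) as t tends to 0 from the right.\<close>
definition analytic_semigroup :: "('h::real_normed_vector \<Rightarrow> 'h) \<Rightarrow> 'h set \<Rightarrow> (real \<Rightarrow> 'h \<Rightarrow> 'h) \<Rightarrow> bool" where
  "analytic_semigroup A D S \<longleftrightarrow>
     (\<forall>t>0. range (S t) \<subseteq> D) \<and>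
     (\<exists>M. \<forall>t\<in>{0<..1}. \<forall>x. norm (A (S t x)) \<le> M / t * norm x)"

definition generates_compact_analytic_semigroup ::
    "('h::real_normed_vector \<Rightarrow> 'h) \<Rightarrow> 'h set \<Rightarrow> (real \<Rightarrow> 'h \<Rightarrow> 'h) \<Rightarrow> bool" where
  "generates_compact_analytic_semigroup A D S \<longleftrightarrow>
     C0_semigroup S \<and> generator_of A D S \<and> compact_semigroup S \<and> analytic_semigroup A D S"

text \<open>Negative fractional power (1 - A) to the power -alpha, via the Gamma-integral formula
  (1-A)^(-alpha) y = 1/Gamma(alpha) * integral over (0,inf) of t^(alpha-1) e^(-t) S(t) y dt.
  The space H^alpha = D((1-A)^alpha) is its range, with norm of u = J y equal to norm y.\<close>
definition neg_frac_power :: "(real \<Rightarrow> 'h::real_normed_vector \<Rightarrow> 'h) \<Rightarrow> real \<Rightarrow> 'h \<Rightarrow> 'h" where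
  "neg_frac_power S \<alpha> y =
     (1 / Gamma \<alpha>) *\<^sub>R integral {0<..} (\<lambda>t. (t powr (\<alpha> - 1) * exp (- t)) *\<^sub>R S t y)"

definition norm_on :: "'h::real_vector set \<Rightarrow> ('h \<Rightarrow> real) \<Rightarrow> bool" where
  "norm_on X nX \<longleftrightarrow> subspace X \<and>
     (\<forall>x\<in>X. nX x \<ge> 0 \<and> (nX x = 0 \<longleftrightarrow> x = 0)) \<and>
     (\<forall>x\<in>X. \<forall>a. nX (a *\<^sub>R x) = \<bar>a\<bar> * nX x) \<and>
     (\<forall>x\<in>X. \<forall>y\<in>X. nX (x + y) \<le> nX x + nX y)"

definition complete_wrt :: "'h::real_vector set \<Rightarrow> ('h \<Rightarrow> real) \<Rightarrow> bool" where
  "complete_wrt X nX \<longleftrightarrow>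
     (\<forall>f. (\<forall>n. f n \<in> X) \<longrightarrow> (\<forall>\<epsilon>>0. \<exists>N. \<forall>m\<ge>N. \<forall>n\<ge>N. nX (f m - f n) < \<epsilon>) \<longrightarrow>
        (\<exists>x\<in>X. (\<lambda>n. nX (f n - x)) \<longlonglongrightarrow> 0))"

definition in_dual :: "'h::real_vector set \<Rightarrow> ('h \<Rightarrow> real) \<Rightarrow> ('h \<Rightarrow> real) \<Rightarrow> bool" where
  "in_dual X nX \<phi> \<longleftrightarrow>
     (\<forall>x\<in>X. \<forall>y\<in>X. \<forall>a b. \<phi> (a *\<^sub>R x + b *\<^sub>R y) = a * \<phi> x + b * \<phi> y) \<and>
     (\<exists>K. \<forall>x\<in>X. \<bar>\<phi> x\<bar> \<le> K * nX x)"

definition orth_proj :: "'h::real_inner set \<Rightarrow> 'h \<Rightarrow> 'h" where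
  "orth_proj N h = (THE p. p \<in> N \<and> (\<forall>y\<in>N. (h - p) \<bullet> y = 0))"

text \<open>Extension of the orthogonal projection onto N to functionals (elements of X*, a subspace
  of H^(-alpha)) by duality: P phi is the element n of N with n . h = phi (P h) for all h.\<close>
definition orth_proj_dual :: "'h::real_inner set \<Rightarrow> ('h \<Rightarrow> real) \<Rightarrow> 'h" where
  "orth_proj_dual N \<phi> = (THE n. n \<in> N \<and> (\<forall>h. n \<bullet> h = \<phi> (orth_proj N h)))"

end

theory Submission
  imports Defs
begin

text \<open>The semigroup commutes with its generator, so it maps the kernel of A into itself. The kernel
  being the line through e, S t e = \<mu>(t) e with a scalar \<mu> that is multiplicative in t and has
  right derivative A e \<bullet> e = 0 at 0; such a \<mu> is constantly 1. Hence S fixes e, and so does the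
  Gamma-integral defining (1 - A) to the power -\<alpha>; thus e lies in X. On the line through e the
  trilinear form gives F(\<xi> e)(\<eta> e) = \<xi>^3 \<eta> T(e,e,e,e), and dissipativity tested against v = 0
  forces T(e,e,e,e) \<le> -c nX(e)^4 < 0.\<close>

lemma abs_power_minus_one_le:
  fixes a :: real
  shows "\<bar>a ^ n - 1\<bar> \<le> (1 + \<bar>a - 1\<bar>) ^ n - 1"
proof (induction n)
  case 0
  then show ?case by simp
next
  case (Suc n)
  have "a ^ Suc n - 1 = a * (a ^ n - 1) + (a - 1)"
    by (simp add: algebra_simps)
  then have "\<bar>a ^ Suc n - 1\<bar> \<le> \<bar>a\<bar> * \<bar>a ^ n - 1\<bar> + \<bar>a - 1\<bar>"
    by (metis abs_mult abs_triangle_ineq)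
  also have "\<dots> \<le> (1 + \<bar>a - 1\<bar>) * ((1 + \<bar>a - 1\<bar>) ^ n - 1) + \<bar>a - 1\<bar>"
    by (intro add_right_mono mult_mono Suc.IH) auto
  also have "\<dots> = (1 + \<bar>a - 1\<bar>) ^ Suc n - 1"
    by (simp add: algebra_simps)
  finally show ?case .
qed

lemma multiplicative_right_deriv_zero_eq_one:
  fixes f :: "real \<Rightarrow> real"
  assumes mult: "\<And>s t. 0 \<le> s \<Longrightarrow> 0 \<le> t \<Longrightarrow> f (s + t) = f s * f t"
    and deriv: "((\<lambda>h. (f h - 1) / h) \<longlongrightarrow> 0) (at_right 0)"
    and t: "0 < t"
  shows "f t = 1"
proof -
  have power: "f (real n * h) = f h ^ n" if "0 \<le> h" "0 < n" for n h
    using \<open>0 < n\<close>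
  proof (induction n rule: nat_induct_non_zero)
    case (Suc n)
    have "real (Suc n) * h = h + real n * h"
      by (simp add: algebra_simps)
    with Suc.IH show ?case
      using mult[of h "real n * h"] that(1) by simp
  qed simp
  have bound: "\<bar>f t - 1\<bar> \<le> exp (\<epsilon> * t) - 1" if "0 < \<epsilon>" for \<epsilon>
  proof -
    obtain \<delta> where "0 < \<delta>" and \<delta>: "\<And>h. 0 < h \<Longrightarrow> h < \<delta> \<Longrightarrow> \<bar>(f h - 1) / h\<bar> < \<epsilon>"
      using tendstoD[OF deriv \<open>0 < \<epsilon>\<close>] unfolding eventually_at_right_field by auto
    obtain n :: nat where n: "t / \<delta> < real n"
      using reals_Archimedean2 by blast
    then have "0 < n"
      using t \<open>0 < \<delta>\<close> by (metis divide_pos_pos gr0I of_nat_0 order_less_asym)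
    define h where "h = t / real n"
    have "0 < h" "h < \<delta>"
      using \<open>0 < n\<close> t n \<open>0 < \<delta>\<close> by (auto simp: h_def field_simps)
    then have "\<bar>f h - 1\<bar> < \<epsilon> * h"
      using \<delta>[of h] by (simp add: abs_divide divide_less_eq)
    then have "\<bar>f h - 1\<bar> \<le> \<epsilon> * t / real n"
      by (simp add: h_def)
    have "f t = f h ^ n"
      using power[of h n] \<open>0 < h\<close> \<open>0 < n\<close> by (simp add: h_def)
    then have "\<bar>f t - 1\<bar> \<le> (1 + \<bar>f h - 1\<bar>) ^ n - 1"
      using abs_power_minus_one_le by simp
    also have "\<dots> \<le> (1 + \<epsilon> * t / real n) ^ n - 1"
      using \<open>\<bar>f h - 1\<bar> \<le> \<epsilon> * t / real n\<close> by (simp add: power_mono)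
    also have "\<dots> \<le> exp (\<epsilon> * t) - 1"
      using exp_ge_one_plus_x_over_n_power_n[of n "\<epsilon> * t"] mult_pos_pos[OF \<open>0 < \<epsilon>\<close> t] \<open>0 < n\<close>
      by simp
    finally show ?thesis .
  qed
  have "((\<lambda>\<epsilon>. exp (\<epsilon> * t) - 1) \<longlongrightarrow> exp (0 * t) - 1) (at_right (0::real))"
    by (intro tendsto_intros)
  then have "\<bar>f t - 1\<bar> \<le> exp (0 * t) - 1"
    by (rule tendsto_lowerbound) (auto intro: eventually_mono[OF eventually_at_right_less] bound)
  then show ?thesis
    by simp
qed


lemma C0_semigroup_commutes_with_generator:
  assumes S: "C0_semigroup S" and gen: "generator_of A D S" and "x \<in> D" "0 \<le> t"
  shows "S t x \<in> D" "A (S t x) = S t (A x)"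
proof -
  have St: "bounded_linear (S t)"
    using S \<open>0 \<le> t\<close> by (simp add: C0_semigroup_def)
  have "((\<lambda>h. S t ((1 / h) *\<^sub>R (S h x - x))) \<longlongrightarrow> S t (A x)) (at_right 0)"
    using gen \<open>x \<in> D\<close> by (intro bounded_linear.tendsto[OF St]) (simp add: generator_of_def)
  moreover have "\<forall>\<^sub>F h in at_right 0. S t ((1 / h) *\<^sub>R (S h x - x)) = (1 / h) *\<^sub>R (S h (S t x) - S t x)"
    using eventually_at_right_less
  proof (rule eventually_mono)
    fix h :: real
    assume "0 < h"
    have "S h (S t x) = S (h + t) x" "S t (S h x) = S (t + h) x"
      using S \<open>0 < h\<close> \<open>0 \<le> t\<close> by (simp_all add: C0_semigroup_def)
    then have "S h (S t x) = S t (S h x)"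
      by (simp add: add.commute)
    then show "S t ((1 / h) *\<^sub>R (S h x - x)) = (1 / h) *\<^sub>R (S h (S t x) - S t x)"
      by (simp add: bounded_linear.linear[OF St] linear_cmul linear_diff)
  qed
  ultimately have lim: "((\<lambda>h. (1 / h) *\<^sub>R (S h (S t x) - S t x)) \<longlongrightarrow> S t (A x)) (at_right 0)"
    by (rule Lim_transform_eventually)
  then show "S t x \<in> D"
    using gen by (auto simp: generator_of_def)
  with gen have "((\<lambda>h. (1 / h) *\<^sub>R (S h (S t x) - S t x)) \<longlongrightarrow> A (S t x)) (at_right 0)"
    by (simp add: generator_of_def)
  from tendsto_unique[OF _ this lim] show "A (S t x) = S t (A x)"
    by simp
qed

lemma line_member_eq_scaleR:
  fixes e :: "'a::real_inner"
  assumes "x \<in> range (\<lambda>\<xi>. \<xi> *\<^sub>R e)"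
  shows "x = ((x \<bullet> e) / (e \<bullet> e)) *\<^sub>R e"
  using assms by (cases "e = 0") auto

text \<open>Without continuity of t \<mapsto> S t e at our disposal, the scalar function \<mu> is handled by
  its multiplicativity alone.\<close>

lemma C0_semigroup_fixes_kernel_line:
  fixes S :: "real \<Rightarrow> 'h::real_inner \<Rightarrow> 'h"
  assumes S: "C0_semigroup S" and gen: "generator_of A D S"
    and e: "e \<in> D" "A e = 0" and kernel: "{x\<in>D. A x = 0} \<subseteq> range (\<lambda>\<xi>. \<xi> *\<^sub>R e)"
    and "0 < t"
  shows "S t e = e"
proof (cases "e = 0")
  case True
  then show ?thesis
    using S \<open>0 < t\<close> by (simp add: C0_semigroup_def linear_simps)
next
  case False
  then have "e \<bullet> e \<noteq> 0"
    by simp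
  define \<mu> where "\<mu> s = (S s e \<bullet> e) / (e \<bullet> e)" for s
  have lin: "linear (S s)" if "0 \<le> s" for s
    using S that by (simp add: C0_semigroup_def bounded_linear.linear)
  have S_line: "S s e = \<mu> s *\<^sub>R e" if "0 \<le> s" for s
  proof -
    have "S s e \<in> {x\<in>D. A x = 0}"
      using C0_semigroup_commutes_with_generator[OF S gen e(1) that] e(2) lin[OF that]
      by (simp add: linear_0)
    then show ?thesis
      unfolding \<mu>_def using kernel line_member_eq_scaleR by blast
  qed
  have "\<mu> (s + r) = \<mu> s * \<mu> r" if "0 \<le> s" "0 \<le> r" for s r
  proof -
    have "S (s + r) e = S s (S r e)"
      using S that by (simp add: C0_semigroup_def)
    also have "\<dots> = (\<mu> s * \<mu> r) *\<^sub>R e"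
      using S_line that lin[OF that(1)] by (simp add: linear_cmul)
    finally show ?thesis
      using \<open>e \<bullet> e \<noteq> 0\<close> by (simp add: \<mu>_def)
  qed
  moreover have "((\<lambda>h. (\<mu> h - 1) / h) \<longlongrightarrow> 0) (at_right 0)"
  proof -
    have "((\<lambda>h. ((1 / h) *\<^sub>R (S h e - e)) \<bullet> e / (e \<bullet> e)) \<longlongrightarrow> A e \<bullet> e / (e \<bullet> e)) (at_right 0)"
      using gen e(1) \<open>e \<bullet> e \<noteq> 0\<close> by (intro tendsto_intros) (simp_all add: generator_of_def)
    then show ?thesis
      using e(2) \<open>e \<bullet> e \<noteq> 0\<close> by (simp add: \<mu>_def inner_diff_left diff_divide_distrib mult.commute)
  qed
  ultimately have "\<mu> t = 1"
    using multiplicative_right_deriv_zero_eq_one \<open>0 < t\<close> by blast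
  then show ?thesis
    using S_line \<open>0 < t\<close> by simp
qed


lemma Gamma_has_integral_greaterThan_0:
  fixes \<alpha> :: real
  assumes "0 < \<alpha>"
  shows "((\<lambda>t. t powr (\<alpha> - 1) * exp (- t)) has_integral Gamma \<alpha>) {0<..}"
proof -
  have "((\<lambda>t. t powr (\<alpha> - 1) / exp t) has_integral Gamma \<alpha>) {0..}"
    by (rule Gamma_integral_real[OF assms])
  then have "((\<lambda>t. if t \<in> {0<..} then t powr (\<alpha> - 1) / exp t else 0) has_integral Gamma \<alpha>) {0..}"
    by (rule has_integral_spike [of "{0}", rotated 2]) auto
  then have "((\<lambda>t. t powr (\<alpha> - 1) / exp t) has_integral Gamma \<alpha>) {0<..}"
    by (subst (asm) has_integral_restrict) auto
  then show ?thesis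
    by (simp add: exp_minus field_simps)
qed

lemma neg_frac_power_fixed_point:
  assumes "\<And>t. 0 < t \<Longrightarrow> S t x = x" and "0 < \<alpha>"
  shows "neg_frac_power S \<alpha> x = x"
proof -
  have "integral {0<..} (\<lambda>t. (t powr (\<alpha> - 1) * exp (- t)) *\<^sub>R S t x)
      = integral {0<..} (\<lambda>t. (t powr (\<alpha> - 1) * exp (- t)) *\<^sub>R x)"
    using assms(1) by (intro integral_cong) simp
  also have "\<dots> = Gamma \<alpha> *\<^sub>R x"
    using has_integral_scaleR_left[OF Gamma_has_integral_greaterThan_0[OF \<open>0 < \<alpha>\<close>]]
    by (rule integral_unique)
  finally show ?thesis
    using Gamma_real_pos[OF \<open>0 < \<alpha>\<close>] by (simp add: neg_frac_power_def)
qed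

lemma range_scaleR_eq:
  fixes e :: "'a::real_vector"
  assumes "e \<noteq> 0" "e \<in> range (\<lambda>\<xi>. \<xi> *\<^sub>R e0)"
  shows "range (\<lambda>\<xi>. \<xi> *\<^sub>R e0) = range (\<lambda>\<xi>. \<xi> *\<^sub>R e)"
proof -
  obtain a where a: "e = a *\<^sub>R e0"
    using assms(2) by blast
  with assms(1) have "a \<noteq> 0"
    by auto
  have "\<xi> *\<^sub>R e0 = (\<xi> / a) *\<^sub>R e" "\<xi> *\<^sub>R e = (\<xi> * a) *\<^sub>R e0" for \<xi>
    using a \<open>a \<noteq> 0\<close> by simp_all
  then show ?thesis
    by (metis (no_types, lifting) equalityI image_subset_iff rangeI)
qed

lemma orth_proj_line:
  fixes e :: "'a::real_inner"
  assumes "norm e = 1"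
  shows "orth_proj (range (\<lambda>\<xi>. \<xi> *\<^sub>R e)) h = (h \<bullet> e) *\<^sub>R e"
  unfolding orth_proj_def
proof (rule the_equality)
  have "e \<bullet> e = 1"
    using assms by (simp add: dot_square_norm)
  then show "(h \<bullet> e) *\<^sub>R e \<in> range (\<lambda>\<xi>. \<xi> *\<^sub>R e) \<and>
      (\<forall>y\<in>range (\<lambda>\<xi>. \<xi> *\<^sub>R e). (h - (h \<bullet> e) *\<^sub>R e) \<bullet> y = 0)"
    by (auto simp: inner_diff_left)
next
  fix p
  assume p: "p \<in> range (\<lambda>\<xi>. \<xi> *\<^sub>R e) \<and> (\<forall>y\<in>range (\<lambda>\<xi>. \<xi> *\<^sub>R e). (h - p) \<bullet> y = 0)"
  then have "p \<bullet> e = h \<bullet> e"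
    by (metis inner_diff_left rangeI right_minus_eq scaleR_one)
  with p assms show "p = (h \<bullet> e) *\<^sub>R e"
    by (auto simp: dot_square_norm)
qed

lemma orth_proj_dual_line:
  fixes e :: "'a::real_inner"
  assumes "norm e = 1" and hom: "\<And>a. \<phi> (a *\<^sub>R e) = a * \<phi> e"
  shows "orth_proj_dual (range (\<lambda>\<xi>. \<xi> *\<^sub>R e)) \<phi> = \<phi> e *\<^sub>R e"
  unfolding orth_proj_dual_def orth_proj_line[OF assms(1)]
proof (rule the_equality)
  show "\<phi> e *\<^sub>R e \<in> range (\<lambda>\<xi>. \<xi> *\<^sub>R e) \<and> (\<forall>h. \<phi> e *\<^sub>R e \<bullet> h = \<phi> ((h \<bullet> e) *\<^sub>R e))"
    by (auto simp: hom inner_commute)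
next
  fix n
  assume n: "n \<in> range (\<lambda>\<xi>. \<xi> *\<^sub>R e) \<and> (\<forall>h. n \<bullet> h = \<phi> ((h \<bullet> e) *\<^sub>R e))"
  then have "n \<bullet> e = \<phi> e"
    using assms by (simp add: hom dot_square_norm)
  moreover obtain \<xi> where "n = \<xi> *\<^sub>R e"
    using n by blast
  ultimately show "n = \<phi> e *\<^sub>R e"
    using assms(1) by (simp add: dot_square_norm)
qed

lemma trilinear_on_line:
  assumes X: "subspace X" "e \<in> X" "z \<in> X"
    and T_trilinear:
      "\<forall>u1\<in>X. \<forall>u2\<in>X. \<forall>v\<in>X. \<forall>w\<in>X. \<forall>z\<in>X. \<forall>a b.
         T (a *\<^sub>R u1 + b *\<^sub>R u2) v w z = a * T u1 v w z + b * T u2 v w z"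
      "\<forall>u\<in>X. \<forall>v1\<in>X. \<forall>v2\<in>X. \<forall>w\<in>X. \<forall>z\<in>X. \<forall>a b.
         T u (a *\<^sub>R v1 + b *\<^sub>R v2) w z = a * T u v1 w z + b * T u v2 w z"
      "\<forall>u\<in>X. \<forall>v\<in>X. \<forall>w1\<in>X. \<forall>w2\<in>X. \<forall>z\<in>X. \<forall>a b.
         T u v (a *\<^sub>R w1 + b *\<^sub>R w2) z = a * T u v w1 z + b * T u v w2 z"
  shows "T (\<xi> *\<^sub>R e) (\<xi> *\<^sub>R e) (\<xi> *\<^sub>R e) z = \<xi> ^ 3 * T e e e z"
proof -
  have line: "\<xi> *\<^sub>R e \<in> X"
    using X by (simp add: subspace_scale)
  have "T (\<xi> *\<^sub>R e + 0 *\<^sub>R e) (\<xi> *\<^sub>R e) (\<xi> *\<^sub>R e) z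
      = \<xi> * T e (\<xi> *\<^sub>R e) (\<xi> *\<^sub>R e) z + 0 * T e (\<xi> *\<^sub>R e) (\<xi> *\<^sub>R e) z"
    using T_trilinear(1) X line by blast
  moreover have "T e (\<xi> *\<^sub>R e + 0 *\<^sub>R e) (\<xi> *\<^sub>R e) z
      = \<xi> * T e e (\<xi> *\<^sub>R e) z + 0 * T e e (\<xi> *\<^sub>R e) z"
    using T_trilinear(2) X line by blast
  moreover have "T e e (\<xi> *\<^sub>R e + 0 *\<^sub>R e) z = \<xi> * T e e e z + 0 * T e e e z"
    using T_trilinear(3) X by blast
  ultimately show ?thesis
    by (simp add: power3_eq_cube)
qed


theorem lemma4p1:
  fixes A :: "'h::{real_inner, complete_space, second_countable_topology} \<Rightarrow> 'h"
    and D :: "'h set" and S :: "real \<Rightarrow> 'h \<Rightarrow> 'h"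
    and X :: "'h set" and nX :: "'h \<Rightarrow> real" and \<alpha> :: real
    and T :: "'h \<Rightarrow> 'h \<Rightarrow> 'h \<Rightarrow> 'h \<Rightarrow> real"
    and F :: "'h \<Rightarrow> 'h \<Rightarrow> real"
    and c :: real and e :: 'h
  assumes A_lin: "subspace D" "\<forall>x\<in>D. \<forall>y\<in>D. \<forall>a b. A (a *\<^sub>R x + b *\<^sub>R y) = a *\<^sub>R A x + b *\<^sub>R A y"
    and A_sym: "\<forall>x\<in>D. \<forall>y\<in>D. A x \<bullet> y = x \<bullet> A y"
    and A_nonpos: "\<forall>x\<in>D. A x \<bullet> x \<le> 0"
    and A_gen: "generates_compact_analytic_semigroup A D S"
    and kernel_1d: "\<exists>e0. e0 \<noteq> 0 \<and> {x\<in>D. A x = 0} = range (\<lambda>\<xi>. \<xi> *\<^sub>R e0)"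
    and alpha: "0 < \<alpha>" "\<alpha> < 1/2"
    and X_banach: "norm_on X nX" "complete_wrt X nX"
    and X_in_H: "\<exists>K. \<forall>x\<in>X. norm x \<le> K * nX x" "closure X = UNIV"
    and Halpha_in_X: "\<forall>y. neg_frac_power S \<alpha> y \<in> X"
      "\<exists>K. \<forall>y. nX (neg_frac_power S \<alpha> y) \<le> K * norm y"
      "\<forall>x\<in>X. \<forall>\<epsilon>>0. \<exists>y. nX (x - neg_frac_power S \<alpha> y) < \<epsilon>"
    and T_dual: "\<forall>u\<in>X. \<forall>v\<in>X. \<forall>w\<in>X. in_dual X nX (T u v w)"
    and T_trilinear:
      "\<forall>u1\<in>X. \<forall>u2\<in>X. \<forall>v\<in>X. \<forall>w\<in>X. \<forall>z\<in>X. \<forall>a b.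
         T (a *\<^sub>R u1 + b *\<^sub>R u2) v w z = a * T u1 v w z + b * T u2 v w z"
      "\<forall>u\<in>X. \<forall>v1\<in>X. \<forall>v2\<in>X. \<forall>w\<in>X. \<forall>z\<in>X. \<forall>a b.
         T u (a *\<^sub>R v1 + b *\<^sub>R v2) w z = a * T u v1 w z + b * T u v2 w z"
      "\<forall>u\<in>X. \<forall>v\<in>X. \<forall>w1\<in>X. \<forall>w2\<in>X. \<forall>z\<in>X. \<forall>a b.
         T u v (a *\<^sub>R w1 + b *\<^sub>R w2) z = a * T u v w1 z + b * T u v w2 z"
    and F_cubic: "\<forall>u\<in>X. \<forall>z\<in>X. F u z = T u u u z"
    and c_pos: "c > 0"
    and F_dissipative: "\<forall>u\<in>X. \<forall>v\<in>X. F u (u - v) - F v (u - v) \<le> - c * nX (u - v) ^ 4"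
    and e_in_N: "e \<in> D" "A e = 0"
    and e_unit: "norm e = 1"
  shows "\<exists>C>0. \<forall>\<xi>::real.
           orth_proj_dual {x\<in>D. A x = 0} (F (\<xi> *\<^sub>R e)) = (- C * \<xi> ^ 3) *\<^sub>R e"
proof -
  have "e \<noteq> 0"
    using e_unit by auto
  obtain e0 where e0: "{x\<in>D. A x = 0} = range (\<lambda>\<xi>. \<xi> *\<^sub>R e0)"
    using kernel_1d by blast
  then have kernel: "{x\<in>D. A x = 0} = range (\<lambda>\<xi>. \<xi> *\<^sub>R e)"
    using range_scaleR_eq[OF \<open>e \<noteq> 0\<close>, of e0] e_in_N by blast
  have S: "C0_semigroup S" and gen: "generator_of A D S"
    using A_gen by (simp_all add: generates_compact_analytic_semigroup_def)
  have "S t e = e" if "0 < t" for t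
    by (rule C0_semigroup_fixes_kernel_line[OF S gen e_in_N]) (simp_all add: kernel that)
  then have "e \<in> X"
    using Halpha_in_X(1) neg_frac_power_fixed_point alpha(1) by metis
  have "subspace X"
    using X_banach(1) by (simp add: norm_on_def)
  have cube: "F (\<xi> *\<^sub>R e) z = \<xi> ^ 3 * T e e e z" if "z \<in> X" for \<xi> z
    using trilinear_on_line[OF \<open>subspace X\<close> \<open>e \<in> X\<close> that T_trilinear] F_cubic that
      \<open>subspace X\<close> \<open>e \<in> X\<close> by (simp add: subspace_scale)
  have "T e e e e \<le> - c * nX e ^ 4"
    using F_dissipative[rule_format, of e 0] cube[of e 1] cube[of e 0] \<open>e \<in> X\<close> \<open>subspace X\<close>
    by (simp add: subspace_0)
  moreover have "0 < nX e"
    using X_banach(1) \<open>e \<in> X\<close> \<open>e \<noteq> 0\<close> unfolding norm_on_def by force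
  then have "0 < c * nX e ^ 4"
    using c_pos by simp
  ultimately have "T e e e e < 0"
    by linarith
  moreover have "F (\<xi> *\<^sub>R e) (a *\<^sub>R e) = a * F (\<xi> *\<^sub>R e) e" for \<xi> a
  proof -
    have "T e e e (a *\<^sub>R e + 0 *\<^sub>R e) = a * T e e e e + 0 * T e e e e"
      using T_dual \<open>e \<in> X\<close> unfolding in_dual_def by blast
    then show ?thesis
      using cube \<open>e \<in> X\<close> \<open>subspace X\<close> by (simp add: subspace_scale)
  qed
  ultimately show ?thesis
    unfolding kernel using orth_proj_dual_line[OF e_unit] cube[OF \<open>e \<in> X\<close>]
    by (intro exI[of _ "- T e e e e"]) (simp add: mult.commute)
qed

end
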